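(* Let $m\ge2$ and capacities $B_1,\dots,B_m>0$. Fix an online fractional scheduling algorithm whose output satisfies average block size $B=(B_j)$ with slackness $\Delta(T)=o(T)$ and which uses extension $\Gamma(T)=o(T)$. Then for every horizon $T$ there is an input consisting only of fully patient transactions ($\rho_i=0$ for all $i$) such that the algorithm's output $x$ satisfies $$\frac{SW_{[1:T+\Gamma(T)]}(x)}{SW_{[1:T]}(y)}\le \frac78+o(1),$$ where $y$ is the optimal integral allocation for horizon $T$ respecting the per-block limits $B_j$, and $o(1)$ is as $T\to\infty$.
   Context: Online block packing: $m$ resources with capacities $B_j>0$; transactions $i$ with arrival time $a_i\in\{1,2,\dots\}$, base value $v_i\ge0$, discount $\rho_i\in[0,1]$, demand $w_i\in\mathbb{R}_+^m$; value in block $t\ge a_i$ is $v_i^t=v_i(1-\rho_i)^{t-a_i}$. A fractional allocation is $x=\{x_i^t\}$ with $x_i^t\in[0,1]$, $x_i^t=0$ for $t<a_i$, $\sum_tx_i^t\le1$; integral if all entries are in $\{0,1\}$; it respects per-block limits if $\sum_iw_{ij}x_i^t\le B_j$ for all $t,j$. It has average block size $B$ with slackness $\Delta$ if for all $T_0,K\ge1$ and $j$: $\sum_{t=T_0}^{T_0+K-1}\sum_ix_i^tw_{ij}\le(K+\Delta)B_j$. $SW_{[1:T]}(x)=\sum_{t=1}^T\sum_ix_i^tv_i^t$. An online algorithm decides block $t$ using only transactions with $a_i\le t$; "uses extension $\Gamma$" means its welfare is measured up to time $T+\Gamma$ when compared with the benchmark up to $T$. *)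

theory Defs
  imports "HOL-Analysis.Analysis" "HOL-Library.Landau_Symbols"
begin

text \<open>A transaction: arrival time a, base value v, discount rho, demand vector w
  (resources indexed by j < m).\<close>
record tx =
  arr  :: nat
  val  :: real
  disc :: real
  dem  :: "nat \<Rightarrow> real"

type_synonym input = "nat \<Rightarrow> tx option"

text \<open>An allocation: x i t is the fraction of transaction i put into block t.\<close>
type_synonym alloc = "nat \<Rightarrow> nat \<Rightarrow> real"

definition valid_tx :: "nat \<Rightarrow> tx \<Rightarrow> bool" where
  "valid_tx m tr \<longleftrightarrow> arr tr \<ge> 1 \<and> val tr \<ge> 0 \<and> 0 \<le> disc tr \<and> disc tr \<le> 1
     \<and> (\<forall>j<m. dem tr j \<ge> 0)"

definition valid_input :: "nat \<Rightarrow> input \<Rightarrow> bool" where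
  "valid_input m I \<longleftrightarrow> finite (dom I) \<and> (\<forall>i tr. I i = Some tr \<longrightarrow> valid_tx m tr)"

definition value_at :: "tx \<Rightarrow> nat \<Rightarrow> real" where
  "value_at tr t = val tr * (1 - disc tr) ^ (t - arr tr)"

definition fractional_alloc :: "input \<Rightarrow> alloc \<Rightarrow> bool" where
  "fractional_alloc I x \<longleftrightarrow>
     (\<forall>i\<in>dom I. (\<forall>t. 0 \<le> x i t \<and> x i t \<le> 1)
              \<and> (\<forall>t. t < arr (the (I i)) \<longrightarrow> x i t = 0)
              \<and> (\<forall>N. (\<Sum>t<N. x i t) \<le> 1))"

definition integral_alloc :: "input \<Rightarrow> alloc \<Rightarrow> bool" where
  "integral_alloc I x \<longleftrightarrow> fractional_alloc I x \<and> (\<forall>i\<in>dom I. \<forall>t. x i t \<in> {0, 1})"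

definition respects_limits :: "nat \<Rightarrow> (nat \<Rightarrow> real) \<Rightarrow> input \<Rightarrow> alloc \<Rightarrow> bool" where
  "respects_limits m B I x \<longleftrightarrow>
     (\<forall>t. \<forall>j<m. (\<Sum>i\<in>dom I. dem (the (I i)) j * x i t) \<le> B j)"

definition avg_block_size :: "nat \<Rightarrow> (nat \<Rightarrow> real) \<Rightarrow> real \<Rightarrow> input \<Rightarrow> alloc \<Rightarrow> bool" where
  "avg_block_size m B \<Delta> I x \<longleftrightarrow>
     (\<forall>T0\<ge>1. \<forall>K\<ge>1. \<forall>j<m.
        (\<Sum>t\<in>{T0..<T0+K}. \<Sum>i\<in>dom I. x i t * dem (the (I i)) j) \<le> (real K + \<Delta>) * B j)"

definition SW :: "nat \<Rightarrow> input \<Rightarrow> alloc \<Rightarrow> real" where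
  "SW N I x = (\<Sum>t\<in>{1..N}. \<Sum>i\<in>dom I. x i t * value_at (the (I i)) t)"

definition opt_integral :: "nat \<Rightarrow> (nat \<Rightarrow> real) \<Rightarrow> nat \<Rightarrow> input \<Rightarrow> alloc \<Rightarrow> bool" where
  "opt_integral m B T I y \<longleftrightarrow>
     integral_alloc I y \<and> respects_limits m B I y \<and>
     (\<forall>y'. integral_alloc I y' \<and> respects_limits m B I y' \<longrightarrow> SW T I y' \<le> SW T I y)"

definition arrived :: "nat \<Rightarrow> input \<Rightarrow> input" where
  "arrived t I = (\<lambda>i. case I i of None \<Rightarrow> None
                     | Some tr \<Rightarrow> if arr tr \<le> t then Some tr else None)"

text \<open>An online algorithm (possibly knowing the horizon T): its decision for block t
  about the arrived transactions depends only on the transactions arrived by t.\<close>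
definition online :: "nat \<Rightarrow> (nat \<Rightarrow> input \<Rightarrow> alloc) \<Rightarrow> bool" where
  "online m A \<longleftrightarrow>
     (\<forall>T I J t. valid_input m I \<and> valid_input m J \<and> arrived t I = arrived t J \<longrightarrow>
        (\<forall>i\<in>dom (arrived t I). A T I i t = A T J i t))"

end

theory Submission
  imports Defs
begin

text \<open>
  Let h = T div 2 and n = T - h. The adversary releases, at time 1, h early transactions of
  value 1 that fill resource 0 and h bundle transactions of value 1/2 that fill resources 0
  and 1; at time h + 1 it releases n late transactions, either heavy ones (value 1, filling
  resource 0) or light ones (value 1/2, filling resource 1). Up to block h the two inputs are
  indistinguishable, so an online algorithm places the same mass c of bundles into blocks
  1..h in both. With light late transactions the optimum is h + T/2 (bundles first, then
  early and late transactions side by side), while the algorithm earns at most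
  h + c/2 + (T - h)/2. With heavy ones the optimum is T, while every unit of bundle mass
  occupies a unit of resource 0 but earns only 1/2, so the algorithm earns at most T - c/2. Whether
  c \<le> h/2 or not, one of the two ratios is at most 7/8, up to the slack \<Delta> and the
  extension \<Gamma>, which are o(T).
\<close>

lemma sum_atLeastAtMost_split:
  fixes f :: "nat \<Rightarrow> 'a::comm_monoid_add"
  shows "h \<le> N \<Longrightarrow> (\<Sum>t\<in>{1..N}. f t) = (\<Sum>t\<in>{1..h}. f t) + (\<Sum>t\<in>{Suc h..N}. f t)"
  using sum.ub_add_nat[of 1 h f "N - h"] by simp

definition patient_tx :: "nat \<Rightarrow> real \<Rightarrow> (nat \<Rightarrow> real) \<Rightarrow> nat set \<Rightarrow> tx" where
  "patient_tx a v B J = \<lparr>arr = a, val = v, disc = 0, dem = (\<lambda>j. if j \<in> J then B j else 0)\<rparr>"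

lemma patient_tx_simps [simp]:
  "arr (patient_tx a v B J) = a" "val (patient_tx a v B J) = v" "disc (patient_tx a v B J) = 0"
  "dem (patient_tx a v B J) j = (if j \<in> J then B j else 0)"
  by (simp_all add: patient_tx_def)

lemma valid_patient_tx:
  "1 \<le> a \<Longrightarrow> 0 \<le> v \<Longrightarrow> \<forall>j<m. 0 \<le> B j \<Longrightarrow> valid_tx m (patient_tx a v B J)"
  by (simp add: valid_tx_def)

definition three_class_input :: "tx \<Rightarrow> tx \<Rightarrow> tx \<Rightarrow> nat \<Rightarrow> nat \<Rightarrow> input" where
  "three_class_input a c p h n =
     (\<lambda>i. if i < h then Some a else if i < 2*h then Some c else if i < 2*h + n then Some p else None)"

lemma dom_three_class_input: "dom (three_class_input a c p h n) = {..<2*h + n}"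
  by (auto simp: three_class_input_def dom_def)

lemma valid_three_class_input:
  "valid_tx m a \<Longrightarrow> valid_tx m c \<Longrightarrow> valid_tx m p \<Longrightarrow> valid_input m (three_class_input a c p h n)"
  by (auto simp: valid_input_def dom_three_class_input) (auto simp: three_class_input_def split: if_splits)

lemma sum_dom_three_class_input:
  fixes f :: "nat \<Rightarrow> real" and g :: "tx \<Rightarrow> real" and a c p :: tx and h n :: nat
  defines "I \<equiv> three_class_input a c p h n"
  shows "(\<Sum>i\<in>dom I. f i * g (the (I i))) =
    g a * (\<Sum>i<h. f i) + g c * (\<Sum>i\<in>{h..<2*h}. f i) + g p * (\<Sum>i\<in>{2*h..<2*h+n}. f i)"
proof -
  have split: "(\<Sum>i<2*h+n. F i) = (\<Sum>i<h. F i) + (\<Sum>i\<in>{h..<2*h}. F i) + (\<Sum>i\<in>{2*h..<2*h+n}. F i)"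
    for F :: "nat \<Rightarrow> real"
    by (simp add: lessThan_atLeast0 sum.atLeastLessThan_concat)
  show ?thesis
    unfolding I_def dom_three_class_input split
    by (simp add: three_class_input_def sum_distrib_left mult.commute cong: sum.cong_simp)
qed

lemma fractional_alloc_nonneg: "fractional_alloc I x \<Longrightarrow> i \<in> dom I \<Longrightarrow> 0 \<le> x i t"
  by (simp add: fractional_alloc_def)

lemma fractional_alloc_before_arrival:
  "fractional_alloc I x \<Longrightarrow> i \<in> dom I \<Longrightarrow> t < arr (the (I i)) \<Longrightarrow> x i t = 0"
  by (simp add: fractional_alloc_def)

lemma fractional_alloc_sum_le_1:
  assumes x: "fractional_alloc I x" and i: "i \<in> dom I" and W: "finite W"
  shows "(\<Sum>t\<in>W. x i t) \<le> 1"
proof -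
  obtain M where "W \<subseteq> {..<M}" using W finite_nat_bounded by blast
  then have "(\<Sum>t\<in>W. x i t) \<le> (\<Sum>t<M. x i t)"
    using fractional_alloc_nonneg[OF x i] by (intro sum_mono2) auto
  also have "\<dots> \<le> 1" using x i by (simp add: fractional_alloc_def)
  finally show ?thesis .
qed

lemma fractional_alloc_class_mass_le:
  assumes x: "fractional_alloc I x" and K: "K \<subseteq> dom I" "finite K" and W: "finite W"
  shows "(\<Sum>t\<in>W. \<Sum>i\<in>K. x i t) \<le> card K"
proof -
  have "(\<Sum>t\<in>W. \<Sum>i\<in>K. x i t) = (\<Sum>i\<in>K. \<Sum>t\<in>W. x i t)" by (rule sum.swap)
  also have "\<dots> \<le> (\<Sum>i\<in>K. 1)"
    using K by (intro sum_mono fractional_alloc_sum_le_1[OF x _ W]) auto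
  finally show ?thesis by simp
qed

definition schedule :: "nat set \<Rightarrow> (nat \<Rightarrow> nat) \<Rightarrow> alloc" where
  "schedule S slot = (\<lambda>i t. if i \<in> S \<and> t = slot i then 1 else 0)"

lemma sum_schedule_row:
  "finite W \<Longrightarrow> (\<Sum>t\<in>W. schedule S slot i t) = (if i \<in> S \<and> slot i \<in> W then 1 else 0)"
  by (cases "i \<in> S") (simp_all add: schedule_def split: if_splits)

lemma integral_alloc_schedule:
  assumes "\<forall>i\<in>S \<inter> dom I. arr (the (I i)) \<le> slot i"
  shows "integral_alloc I (schedule S slot)"
proof -
  have "(\<Sum>t<M. schedule S slot i t) \<le> 1" for i M
    by (simp add: sum_schedule_row)
  moreover have "schedule S slot i t = 0" if "i \<in> dom I" "t < arr (the (I i))" for i t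
    using assms that by (force simp: schedule_def)
  ultimately show ?thesis
    by (auto simp: integral_alloc_def fractional_alloc_def) (simp_all add: schedule_def split: if_splits)
qed

lemma respects_limits_schedule:
  assumes I: "finite (dom I)"
    and B: "\<forall>j<m. 0 \<le> B j"
    and dem_le: "\<forall>j<m. \<forall>i\<in>S \<inter> dom I. dem (the (I i)) j \<le> B j"
    and inj: "\<forall>j<m. inj_on slot {i \<in> S \<inter> dom I. dem (the (I i)) j \<noteq> 0}"
  shows "respects_limits m B I (schedule S slot)"
  unfolding respects_limits_def
proof (intro allI impI)
  fix t j assume j: "j < m"
  define Z where "Z = {i \<in> S \<inter> dom I. dem (the (I i)) j \<noteq> 0 \<and> slot i = t}"
  have "(\<Sum>i\<in>dom I. dem (the (I i)) j * schedule S slot i t) = (\<Sum>i\<in>Z. dem (the (I i)) j)"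
    using I by (intro sum.mono_neutral_cong_right) (auto simp: Z_def schedule_def)
  also have "\<dots> \<le> card Z * B j"
    using dem_le j by (intro sum_bounded_above) (auto simp: Z_def)
  also have "\<dots> \<le> B j"
  proof -
    have "inj_on slot Z" by (rule inj_on_subset[OF inj[rule_format, OF j]]) (auto simp: Z_def)
    then have "card Z = card (slot ` Z)" by (simp add: card_image)
    also have "\<dots> \<le> 1" using card_mono[of "{t}" "slot ` Z"] by (auto simp: Z_def)
    finally show ?thesis using B j by (simp add: mult_left_le_one_le)
  qed
  finally show "(\<Sum>i\<in>dom I. dem (the (I i)) j * schedule S slot i t) \<le> B j" .
qed

lemma class_mass_schedule:
  assumes "finite K" "finite W"
  shows "(\<Sum>t\<in>W. \<Sum>i\<in>K. schedule S slot i t) = card {i \<in> K. i \<in> S \<and> slot i \<in> W}"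
proof -
  have "(\<Sum>t\<in>W. \<Sum>i\<in>K. schedule S slot i t) = (\<Sum>i\<in>K. if i \<in> S \<and> slot i \<in> W then 1 else 0)"
    using assms by (subst sum.swap) (simp add: sum_schedule_row)
  also have "\<dots> = card {i \<in> K. i \<in> S \<and> slot i \<in> W}"
    using assms by (simp add: sum.If_cases) (auto intro!: arg_cong[where f=card])
  finally show ?thesis .
qed

lemma SW_three_class_input:
  assumes "disc a = 0" "disc c = 0" "disc p = 0"
  shows "SW N (three_class_input a c p h n) x = (\<Sum>t\<in>{1..N}.
    val a * (\<Sum>i<h. x i t) + val c * (\<Sum>i\<in>{h..<2*h}. x i t) + val p * (\<Sum>i\<in>{2*h..<2*h+n}. x i t))"
  unfolding SW_def
proof (rule sum.cong[OF refl])
  fix t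
  show "(\<Sum>i\<in>dom (three_class_input a c p h n). x i t * value_at (the (three_class_input a c p h n i)) t) =
    val a * (\<Sum>i<h. x i t) + val c * (\<Sum>i\<in>{h..<2*h}. x i t) + val p * (\<Sum>i\<in>{2*h..<2*h+n}. x i t)"
    using sum_dom_three_class_input[of "\<lambda>i. x i t" "\<lambda>tr. value_at tr t"] assms
    by (simp add: value_at_def)
qed

lemma block_load_three_class_input:
  assumes "respects_limits m B (three_class_input a c p h n) x" "j < m"
  shows "dem a j * (\<Sum>i<h. x i t) + dem c j * (\<Sum>i\<in>{h..<2*h}. x i t)
    + dem p j * (\<Sum>i\<in>{2*h..<2*h+n}. x i t) \<le> B j"
proof -
  let ?I = "three_class_input a c p h n"
  have "(\<Sum>i\<in>dom ?I. x i t * dem (the (?I i)) j) \<le> B j"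
    using assms by (simp add: respects_limits_def mult.commute)
  then show ?thesis using sum_dom_three_class_input[of "\<lambda>i. x i t" "\<lambda>tr. dem tr j"] by simp
qed

lemma window_load_three_class_input:
  assumes "avg_block_size m B D (three_class_input a c p h n) x" "1 \<le> t0" "t0 \<le> t1" "j < m"
  shows "(\<Sum>t\<in>{t0..t1}. dem a j * (\<Sum>i<h. x i t) + dem c j * (\<Sum>i\<in>{h..<2*h}. x i t)
    + dem p j * (\<Sum>i\<in>{2*h..<2*h+n}. x i t)) \<le> (real (Suc t1 - t0) + D) * B j"
proof -
  let ?I = "three_class_input a c p h n"
  have "(\<Sum>t\<in>{t0..<t0 + (Suc t1 - t0)}. \<Sum>i\<in>dom ?I. x i t * dem (the (?I i)) j)
      \<le> (real (Suc t1 - t0) + D) * B j"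
    using assms(1)[unfolded avg_block_size_def, rule_format, of t0 "Suc t1 - t0" j] assms(2-4)
    by simp
  moreover have "{t0..<t0 + (Suc t1 - t0)} = {t0..t1}" using assms(3) by auto
  moreover have "(\<Sum>i\<in>dom ?I. x i t * dem (the (?I i)) j) = dem a j * (\<Sum>i<h. x i t)
      + dem c j * (\<Sum>i\<in>{h..<2*h}. x i t) + dem p j * (\<Sum>i\<in>{2*h..<2*h+n}. x i t)" for t
    using sum_dom_three_class_input[of "\<lambda>i. x i t" "\<lambda>tr. dem tr j"] by simp
  ultimately show ?thesis by simp
qed

abbreviation early_tx :: "(nat \<Rightarrow> real) \<Rightarrow> tx" where
  "early_tx B \<equiv> patient_tx 1 1 B {0}"

abbreviation bundle_tx :: "(nat \<Rightarrow> real) \<Rightarrow> tx" where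
  "bundle_tx B \<equiv> patient_tx 1 (1/2) B {0, 1}"

abbreviation heavy_late_tx :: "(nat \<Rightarrow> real) \<Rightarrow> nat \<Rightarrow> tx" where
  "heavy_late_tx B h \<equiv> patient_tx (Suc h) 1 B {0}"

abbreviation light_late_tx :: "(nat \<Rightarrow> real) \<Rightarrow> nat \<Rightarrow> tx" where
  "light_late_tx B h \<equiv> patient_tx (Suc h) (1/2) B {1}"

abbreviation adversary_input :: "(nat \<Rightarrow> real) \<Rightarrow> nat \<Rightarrow> nat \<Rightarrow> tx \<Rightarrow> input" where
  "adversary_input B h n late \<equiv> three_class_input (early_tx B) (bundle_tx B) late h n"

lemma feasible_SW_heavy_le:
  fixes B :: "nat \<Rightarrow> real" and h n :: nat and x :: alloc
  defines "I \<equiv> adversary_input B h n (heavy_late_tx B h)"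
  assumes x: "fractional_alloc I x" "respects_limits m B I x" and B: "0 < m" "0 < B 0"
  shows "SW N I x \<le> N"
proof -
  have per_block: "(\<Sum>i<h. x i t) + 1/2 * (\<Sum>i\<in>{h..<2*h}. x i t) + (\<Sum>i\<in>{2*h..<2*h+n}. x i t) \<le> 1"
    for t
  proof -
    have "B 0 * ((\<Sum>i<h. x i t) + (\<Sum>i\<in>{h..<2*h}. x i t) + (\<Sum>i\<in>{2*h..<2*h+n}. x i t)) \<le> B 0 * 1"
      using block_load_three_class_input[OF x(2)[unfolded I_def] B(1), of t] by (simp add: algebra_simps)
    moreover have "0 \<le> (\<Sum>i\<in>{h..<2*h}. x i t)"
      using fractional_alloc_nonneg[OF x(1)] by (intro sum_nonneg) (simp add: I_def dom_three_class_input)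
    ultimately show ?thesis using B(2) by (simp add: mult_le_cancel_left_pos)
  qed
  have "SW N I x = (\<Sum>t\<in>{1..N}. (\<Sum>i<h. x i t) + 1/2 * (\<Sum>i\<in>{h..<2*h}. x i t) + (\<Sum>i\<in>{2*h..<2*h+n}. x i t))"
    by (simp add: I_def SW_three_class_input)
  also have "\<dots> \<le> (\<Sum>t\<in>{1..N}. 1)" by (intro sum_mono per_block)
  finally show ?thesis by simp
qed

lemma feasible_SW_light_le:
  fixes B :: "nat \<Rightarrow> real" and h n :: nat and x :: alloc
  defines "I \<equiv> adversary_input B h n (light_late_tx B h)"
  assumes x: "fractional_alloc I x" "respects_limits m B I x" and B: "1 < m" "0 < B 1"
  shows "SW N I x \<le> h + N / 2"
proof -
  have per_block: "(\<Sum>i\<in>{h..<2*h}. x i t) + (\<Sum>i\<in>{2*h..<2*h+n}. x i t) \<le> 1" for t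
  proof -
    have "B 1 * ((\<Sum>i\<in>{h..<2*h}. x i t) + (\<Sum>i\<in>{2*h..<2*h+n}. x i t)) \<le> B 1 * 1"
      using block_load_three_class_input[OF x(2)[unfolded I_def] B(1), of t] by (simp add: algebra_simps)
    then show ?thesis using B(2) by (simp only: mult_le_cancel_left_pos)
  qed
  have early: "(\<Sum>t\<in>{1..N}. \<Sum>i<h. x i t) \<le> h"
    using fractional_alloc_class_mass_le[OF x(1), of "{..<h}"] by (simp add: I_def dom_three_class_input)
  have "SW N I x = (\<Sum>t\<in>{1..N}. \<Sum>i<h. x i t)
      + 1/2 * (\<Sum>t\<in>{1..N}. (\<Sum>i\<in>{h..<2*h}. x i t) + (\<Sum>i\<in>{2*h..<2*h+n}. x i t))"
    by (simp add: I_def SW_three_class_input sum.distrib sum_distrib_left algebra_simps)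
  also have "\<dots> \<le> h + 1/2 * (\<Sum>t\<in>{1..N}. 1)"
    using early sum_mono[of "{1..N}", OF per_block] by (intro add_mono mult_left_mono) auto
  finally show ?thesis by simp
qed

lemma exists_opt_integral_heavy:
  fixes B :: "nat \<Rightarrow> real" and h n :: nat
  defines "I \<equiv> adversary_input B h n (heavy_late_tx B h)"
  assumes B: "0 < m" "\<forall>j<m. 0 < B j"
  shows "\<exists>y. opt_integral m B (h + n) I y \<and> SW (h + n) I y = h + n"
proof -
  \<comment> \<open>Drop the bundles; early transactions fill blocks 1..h, late ones blocks h+1..h+n.\<close>
  define S where "S = {..<h} \<union> {2*h..<2*h+n}"
  define slot where "slot i = (if i < h then Suc i else Suc i - h)" for i
  define y where "y = schedule S slot"
  have "integral_alloc I y"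
    unfolding y_def by (rule integral_alloc_schedule) (auto simp: I_def S_def slot_def three_class_input_def)
  moreover have "respects_limits m B I y"
  proof -
    have "inj_on slot S" by (auto simp: inj_on_def S_def slot_def)
    moreover have "finite (dom I)" by (simp add: I_def dom_three_class_input)
    ultimately show ?thesis
      unfolding y_def using B
      by (intro respects_limits_schedule)
        (auto simp: I_def three_class_input_def less_imp_le intro: inj_on_subset)
  qed
  moreover have "SW (h + n) I y = h + n"
  proof -
    have "SW (h + n) I y = (\<Sum>t\<in>{1..h+n}. \<Sum>i<h. y i t) + 1/2 * (\<Sum>t\<in>{1..h+n}. \<Sum>i\<in>{h..<2*h}. y i t)
        + (\<Sum>t\<in>{1..h+n}. \<Sum>i\<in>{2*h..<2*h+n}. y i t)"
      by (simp add: I_def SW_three_class_input sum.distrib sum_distrib_left)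
    also have "\<dots> = h + n"
    proof -
      have "{i \<in> {..<h}. i \<in> S \<and> slot i \<in> {1..h+n}} = {..<h}"
        "{i \<in> {h..<2*h}. i \<in> S \<and> slot i \<in> {1..h+n}} = {}"
        "{i \<in> {2*h..<2*h+n}. i \<in> S \<and> slot i \<in> {1..h+n}} = {2*h..<2*h+n}"
        by (auto simp: S_def slot_def)
      then show ?thesis by (simp add: y_def class_mass_schedule)
    qed
    finally show ?thesis .
  qed
  moreover have "SW (h + n) I y' \<le> h + n" if "integral_alloc I y'" "respects_limits m B I y'" for y'
    using feasible_SW_heavy_le[of B h n y' m "h + n"] that B by (simp add: I_def integral_alloc_def)
  ultimately show ?thesis by (auto simp: opt_integral_def)
qed

lemma exists_opt_integral_light:
  fixes B :: "nat \<Rightarrow> real" and h n :: nat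
  defines "I \<equiv> adversary_input B h n (light_late_tx B h)"
  assumes hn: "h \<le> n" and B: "1 < m" "\<forall>j<m. 0 < B j"
  shows "\<exists>y. opt_integral m B (h + n) I y \<and> SW (h + n) I y = h + (h + n) / 2"
proof -
  \<comment> \<open>Bundles fill blocks 1..h; afterwards early transactions (on resource 0)
    share blocks with late ones (on resource 1).\<close>
  define S where "S = {..<2*h+n}"
  define slot where "slot i = (if i < h then Suc (h + i) else Suc i - h)" for i
  define y where "y = schedule S slot"
  have "integral_alloc I y"
    unfolding y_def by (rule integral_alloc_schedule) (auto simp: I_def S_def slot_def three_class_input_def)
  moreover have "respects_limits m B I y"
  proof -
    have inj: "inj_on slot (if j = 0 then {..<2*h} else {h..<2*h+n})" for j :: nat
      by (cases "j = 0") (auto simp: inj_on_def slot_def)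
    have supp: "{i \<in> S \<inter> dom I. dem (the (I i)) j \<noteq> 0} \<subseteq> (if j = 0 then {..<2*h} else {h..<2*h+n})"
      for j by (auto simp: I_def three_class_input_def split: if_splits)
    have "finite (dom I)" by (simp add: I_def dom_three_class_input)
    then show ?thesis
      unfolding y_def
    proof (rule respects_limits_schedule)
      show "\<forall>j<m. 0 \<le> B j" "\<forall>j<m. \<forall>i\<in>S \<inter> dom I. dem (the (I i)) j \<le> B j"
        using B by (auto simp: I_def three_class_input_def less_imp_le)
      show "\<forall>j<m. inj_on slot {i \<in> S \<inter> dom I. dem (the (I i)) j \<noteq> 0}"
        using inj_on_subset[OF inj supp] by blast
    qed
  qed
  moreover have "SW (h + n) I y = h + (h + n) / 2"
  proof -
    have "SW (h + n) I y = (\<Sum>t\<in>{1..h+n}. \<Sum>i<h. y i t) + 1/2 * (\<Sum>t\<in>{1..h+n}. \<Sum>i\<in>{h..<2*h}. y i t)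
        + 1/2 * (\<Sum>t\<in>{1..h+n}. \<Sum>i\<in>{2*h..<2*h+n}. y i t)"
      by (simp add: I_def SW_three_class_input sum.distrib sum_distrib_left)
    also have "\<dots> = h + (h + n) / 2"
    proof -
      have "{i \<in> {..<h}. i \<in> S \<and> slot i \<in> {1..h+n}} = {..<h}"
        "{i \<in> {h..<2*h}. i \<in> S \<and> slot i \<in> {1..h+n}} = {h..<2*h}"
        "{i \<in> {2*h..<2*h+n}. i \<in> S \<and> slot i \<in> {1..h+n}} = {2*h..<2*h+n}"
        using hn by (auto simp: S_def slot_def)
      then show ?thesis by (simp add: y_def class_mass_schedule) (simp add: field_simps)
    qed
    finally show ?thesis .
  qed
  moreover have "SW (h + n) I y' \<le> h + (h + n) / 2" if "integral_alloc I y'" "respects_limits m B I y'" for y'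
    using feasible_SW_light_le[of B h n y' m "h + n"] that B by (simp add: I_def integral_alloc_def)
  ultimately show ?thesis by (auto simp: opt_integral_def)
qed

definition early_bundle_mass :: "alloc \<Rightarrow> nat \<Rightarrow> real" where
  "early_bundle_mass x h = (\<Sum>t\<in>{1..h}. \<Sum>i\<in>{h..<2*h}. x i t)"

lemma SW_light_le_early_bundle_mass:
  fixes B :: "nat \<Rightarrow> real" and h n :: nat and x :: alloc
  defines "I \<equiv> adversary_input B h n (light_late_tx B h)"
  assumes x: "fractional_alloc I x" "avg_block_size m B D I x" and B: "1 < m" "0 < B 1" and hN: "h < N"
  shows "SW N I x \<le> h + early_bundle_mass x h / 2 + (real (N - h) + D) / 2"
proof -
  define load1 where "load1 t = (\<Sum>i\<in>{h..<2*h}. x i t) + (\<Sum>i\<in>{2*h..<2*h+n}. x i t)" for t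
  have early: "(\<Sum>t\<in>{1..N}. \<Sum>i<h. x i t) \<le> h"
    using fractional_alloc_class_mass_le[OF x(1), of "{..<h}"] by (simp add: I_def dom_three_class_input)
  have "x i t = 0" if "i \<in> {2*h..<2*h+n}" "t \<le> h" for i t
    by (rule fractional_alloc_before_arrival[OF x(1)])
      (use that in \<open>auto simp: I_def dom_three_class_input three_class_input_def\<close>)
  then have before: "(\<Sum>t\<in>{1..h}. load1 t) = early_bundle_mass x h"
    by (simp add: load1_def early_bundle_mass_def)
  have "B 1 * (\<Sum>t\<in>{Suc h..N}. load1 t) \<le> B 1 * (real (N - h) + D)"
    using window_load_three_class_input[OF x(2)[unfolded I_def], of "Suc h" N 1] hN B(1)
    by (simp add: load1_def sum_distrib_left algebra_simps)
  then have after: "(\<Sum>t\<in>{Suc h..N}. load1 t) \<le> real (N - h) + D"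
    using B(2) by (simp add: mult_le_cancel_left_pos)
  have "SW N I x = (\<Sum>t\<in>{1..N}. \<Sum>i<h. x i t) + 1/2 * (\<Sum>t\<in>{1..N}. load1 t)"
    by (simp add: I_def load1_def SW_three_class_input sum.distrib sum_distrib_left algebra_simps)
  also have "\<dots> = (\<Sum>t\<in>{1..N}. \<Sum>i<h. x i t) + 1/2 * ((\<Sum>t\<in>{1..h}. load1 t) + (\<Sum>t\<in>{Suc h..N}. load1 t))"
    using sum_atLeastAtMost_split[of h N load1] hN by simp
  finally show ?thesis using early before after by argo
qed

lemma SW_heavy_le_early_bundle_mass:
  fixes B :: "nat \<Rightarrow> real" and h n :: nat and x :: alloc
  defines "I \<equiv> adversary_input B h n (heavy_late_tx B h)"
  assumes x: "fractional_alloc I x" "avg_block_size m B D I x" and B: "0 < m" "0 < B 0"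
    and h: "1 \<le> h" "h < N"
  shows "SW N I x \<le> N + 2 * D - early_bundle_mass x h / 2"
proof -
  define load0 where "load0 t = (\<Sum>i<h. x i t) + (\<Sum>i\<in>{h..<2*h}. x i t) + (\<Sum>i\<in>{2*h..<2*h+n}. x i t)" for t
  have window: "(\<Sum>t\<in>{t0..t1}. load0 t) \<le> real (Suc t1 - t0) + D" if "1 \<le> t0" "t0 \<le> t1" for t0 t1
  proof -
    have "B 0 * (\<Sum>t\<in>{t0..t1}. load0 t) \<le> B 0 * (real (Suc t1 - t0) + D)"
      using window_load_three_class_input[OF x(2)[unfolded I_def] that B(1)]
      by (simp add: load0_def sum_distrib_left algebra_simps)
    then show ?thesis using B(2) by (simp add: mult_le_cancel_left_pos)
  qed
  have "0 \<le> (\<Sum>i\<in>{h..<2*h}. x i t)" for t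
    using fractional_alloc_nonneg[OF x(1)] by (intro sum_nonneg) (simp add: I_def dom_three_class_input)
  then have "0 \<le> (\<Sum>t\<in>{Suc h..N}. \<Sum>i\<in>{h..<2*h}. x i t)" by (simp add: sum_nonneg)
  then have "(\<Sum>t\<in>{1..N}. \<Sum>i\<in>{h..<2*h}. x i t) \<ge> early_bundle_mass x h"
    using sum_atLeastAtMost_split[of h N "\<lambda>t. \<Sum>i\<in>{h..<2*h}. x i t"] h
    by (simp add: early_bundle_mass_def)
  moreover have "SW N I x = (\<Sum>t\<in>{1..N}. load0 t) - 1/2 * (\<Sum>t\<in>{1..N}. \<Sum>i\<in>{h..<2*h}. x i t)"
    by (simp add: I_def load0_def SW_three_class_input sum.distrib sum_distrib_left sum_subtractf algebra_simps)
  moreover have "(\<Sum>t\<in>{1..N}. load0 t) \<le> N + 2 * D"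
    using window[of 1 h] window[of "Suc h" N] sum_atLeastAtMost_split[of h N load0] h by simp
  ultimately show ?thesis by linarith
qed

lemma early_bundle_mass_online:
  assumes "online m A" "valid_tx m a" "valid_tx m c" "valid_tx m p" "valid_tx m p'"
    and "arr c \<le> 1" "h < arr p" "h < arr p'"
  shows "early_bundle_mass (A T (three_class_input a c p h n)) h
       = early_bundle_mass (A T (three_class_input a c p' h n)) h"
  unfolding early_bundle_mass_def
proof (intro sum.cong refl)
  fix t i assume t: "t \<in> {1..h}" and i: "i \<in> {h..<2*h}"
  let ?I = "three_class_input a c p h n" and ?I' = "three_class_input a c p' h n"
  have "arrived t ?I = arrived t ?I'"
    using t assms(7,8) by (auto simp: arrived_def three_class_input_def fun_eq_iff)
  moreover have "i \<in> dom (arrived t ?I)"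
    using t i assms(6) by (auto simp: arrived_def three_class_input_def)
  ultimately show "A T ?I i t = A T ?I' i t"
    using assms(1-5) valid_three_class_input unfolding online_def by blast
qed

definition hard_patient_input ::
    "nat \<Rightarrow> (nat \<Rightarrow> real) \<Rightarrow> (nat \<Rightarrow> input \<Rightarrow> alloc) \<Rightarrow> nat \<Rightarrow> nat \<Rightarrow> real \<Rightarrow> input \<Rightarrow> bool" where
  "hard_patient_input m B A T N r I \<longleftrightarrow>
     valid_input m I \<and> (\<forall>i tr. I i = Some tr \<longrightarrow> disc tr = 0) \<and>
     (\<exists>y. opt_integral m B T I y \<and> SW T I y > 0 \<and> SW N I (A T I) / SW T I y \<le> r)"

lemma valid_adversary_input:
  assumes "\<forall>j<m. 0 < B j" "0 \<le> v"
  shows "valid_input m (adversary_input B h n (patient_tx (Suc h) v B J))"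
    and "\<forall>i tr. adversary_input B h n (patient_tx (Suc h) v B J) i = Some tr \<longrightarrow> disc tr = 0"
  using assms
  by (auto simp: valid_three_class_input valid_patient_tx less_imp_le)
    (auto simp: three_class_input_def split: if_splits)

lemma hard_patient_adversary_input:
  fixes B :: "nat \<Rightarrow> real" and h n :: nat and v :: real and J :: "nat set"
  defines "I \<equiv> adversary_input B h n (patient_tx (Suc h) v B J)"
  assumes "\<forall>j<m. 0 < B j" "0 \<le> v"
    and "opt_integral m B T I y" "0 < SW T I y" "SW N I (A T I) \<le> r * SW T I y"
  shows "hard_patient_input m B A T N r I"
  using assms valid_adversary_input[where B=B and h=h and n=n and v=v and J=J]
  by (auto simp: hard_patient_input_def pos_divide_le_eq)

lemma hard_patient_input_light:
  fixes B :: "nat \<Rightarrow> real" and A :: "nat \<Rightarrow> input \<Rightarrow> alloc" and h n :: nat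
  defines "I \<equiv> adversary_input B h n (light_late_tx B h)"
  assumes B: "2 \<le> m" "\<forall>j<m. 0 < B j"
    and alg: "fractional_alloc I (A T I)" "avg_block_size m B D I (A T I)"
    and T: "T = h + n" "h \<le> n" "n \<le> Suc h" "1 \<le> T" "T \<le> N"
    and committed: "early_bundle_mass (A T I) h \<le> h / 2"
  shows "hard_patient_input m B A T N (7/8 + (1 + real (N - T) + 2 * \<bar>D\<bar>) / T) I"
proof -
  define e where "e = 1 + real (N - T) + 2 * \<bar>D\<bar>"
  obtain y where y: "opt_integral m B T I y" "SW T I y = h + T / 2"
    using exists_opt_integral_light[where B=B and h=h and n=n and m=m] B T by (auto simp: I_def)
  have "SW N I (A T I) \<le> h + early_bundle_mass (A T I) h / 2 + (real (N - h) + D) / 2"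
    using SW_light_le_early_bundle_mass[of B h n] alg B T by (simp add: I_def)
  moreover have "real (N - h) = real (N - T) + real n" "real T = real h + real n" "real n \<le> real h + 1"
    using T by auto
  ultimately have "SW N I (A T I) \<le> 7/8 * h + 7/16 * T + e / 2"
    using committed abs_ge_self[of D] abs_ge_zero[of D] unfolding e_def by argo
  moreover have "(7/8 + e / T) * SW T I y = 7/8 * h + 7/16 * T + e / 2 + e * h / T"
    using T(4) unfolding y(2) by (simp add: field_simps)
  moreover have "0 \<le> e * h / T" by (simp add: e_def)
  ultimately have "SW N I (A T I) \<le> (7/8 + e / T) * SW T I y" by linarith
  moreover have "0 < SW T I y" using y(2) T(4) by simp
  ultimately show ?thesis
    using hard_patient_adversary_input[where B=B and h=h and n=n and v="1/2" and J="{1}"] y(1) B unfolding I_def e_def by auto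
qed

lemma hard_patient_input_heavy:
  fixes B :: "nat \<Rightarrow> real" and A :: "nat \<Rightarrow> input \<Rightarrow> alloc" and h n :: nat
  defines "I \<equiv> adversary_input B h n (heavy_late_tx B h)"
  assumes B: "2 \<le> m" "\<forall>j<m. 0 < B j"
    and alg: "fractional_alloc I (A T I)" "avg_block_size m B D I (A T I)"
    and T: "T = h + n" "h \<le> n" "n \<le> Suc h" "1 \<le> T" "T \<le> N"
    and committed: "h / 2 < early_bundle_mass (A T I) h"
  shows "hard_patient_input m B A T N (7/8 + (1 + real (N - T) + 2 * \<bar>D\<bar>) / T) I"
proof -
  define e where "e = 1 + real (N - T) + 2 * \<bar>D\<bar>"
  have "1 \<le> h" using committed by (cases h) (simp_all add: early_bundle_mass_def)
  obtain y where y: "opt_integral m B T I y" "SW T I y = T"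
    using exists_opt_integral_heavy[where B=B and h=h and n=n and m=m] B T by (auto simp: I_def)
  have "SW N I (A T I) \<le> N + 2 * D - early_bundle_mass (A T I) h / 2"
    using SW_heavy_le_early_bundle_mass[of B h n] alg B T \<open>1 \<le> h\<close> by (simp add: I_def)
  moreover have "real N = real (N - T) + real T" "real T = real h + real n" "real n \<le> real h + 1"
    using T by auto
  ultimately have "SW N I (A T I) \<le> 7/8 * T + e"
    using committed abs_ge_self[of D] unfolding e_def by argo
  moreover have "(7/8 + e / T) * SW T I y = 7/8 * T + e"
    using T(4) unfolding y(2) by (simp add: field_simps)
  ultimately have "SW N I (A T I) \<le> (7/8 + e / T) * SW T I y" by linarith
  moreover have "0 < SW T I y" using y(2) T(4) by simp
  ultimately show ?thesis
    using hard_patient_adversary_input[where B=B and h=h and n=n and v=1 and J="{0}"] y(1) B unfolding I_def e_def by auto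
qed

lemma exists_hard_patient_input:
  assumes B: "2 \<le> m" "\<forall>j<m. 0 < B j" and onl: "online m A"
    and alg: "\<forall>I. valid_input m I \<longrightarrow> fractional_alloc I (A T I) \<and> avg_block_size m B D I (A T I)"
    and T: "1 \<le> T" "T \<le> N"
  shows "\<exists>I. hard_patient_input m B A T N (7/8 + (1 + real (N - T) + 2 * \<bar>D\<bar>) / T) I"
proof -
  define h where "h = T div 2"
  define n where "n = T - h"
  have hn: "T = h + n" "h \<le> n" "n \<le> Suc h" by (auto simp: h_def n_def)
  let ?heavy = "adversary_input B h n (heavy_late_tx B h)"
  let ?light = "adversary_input B h n (light_late_tx B h)"
  have valid: "valid_input m ?heavy" "valid_input m ?light"
    using valid_adversary_input(1) B(2) by auto
  have "early_bundle_mass (A T ?light) h = early_bundle_mass (A T ?heavy) h"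
    using B(2) by (intro early_bundle_mass_online[OF onl]) (auto intro: valid_patient_tx simp: less_imp_le)
  then consider "early_bundle_mass (A T ?light) h \<le> h / 2" | "h / 2 < early_bundle_mass (A T ?heavy) h"
    by fastforce
  then show ?thesis
  proof cases
    case 1
    then show ?thesis using hard_patient_input_light[where B=B and A=A and h=h and n=n] valid alg B T hn by blast
  next
    case 2
    then show ?thesis using hard_patient_input_heavy[where B=B and A=A and h=h and n=n] valid alg B T hn by blast
  qed
qed

lemma smallo_error_tendsto_zero:
  fixes f g :: "nat \<Rightarrow> real"
  assumes "f \<in> o(\<lambda>T. real T)" "g \<in> o(\<lambda>T. real T)"
  shows "(\<lambda>T. (1 + f T + 2 * \<bar>g T\<bar>) / real T) \<longlonglongrightarrow> 0"
proof -
  have "(\<lambda>T. 1 / real T + f T / real T + 2 * \<bar>g T / real T\<bar>) \<longlonglongrightarrow> 0 + 0 + 2 * 0"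
    using assms[THEN smalloD_tendsto]
    by (intro tendsto_add tendsto_mult tendsto_const lim_const_over_n tendsto_rabs_zero) auto
  then show ?thesis by (simp add: add_divide_distrib)
qed

theorem theorem4:
  fixes m :: nat and B :: "nat \<Rightarrow> real"
    and A :: "nat \<Rightarrow> input \<Rightarrow> alloc"
    and \<Delta> :: "nat \<Rightarrow> real" and \<Gamma> :: "nat \<Rightarrow> nat"
  assumes m2: "m \<ge> 2"
    and Bpos: "\<forall>j<m. B j > 0"
    and onl: "online m A"
    and frac: "\<forall>T I. valid_input m I \<longrightarrow> fractional_alloc I (A T I)"
    and avg: "\<forall>T I. valid_input m I \<longrightarrow> avg_block_size m B (\<Delta> T) I (A T I)"
    and Delta_o: "\<Delta> \<in> o(\<lambda>T. real T)"
    and Gamma_o: "(\<lambda>T. real (\<Gamma> T)) \<in> o(\<lambda>T. real T)"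
  shows "\<exists>\<epsilon> :: nat \<Rightarrow> real. \<epsilon> \<longlonglongrightarrow> 0 \<and>
           (\<forall>T\<ge>1. \<exists>I. valid_input m I \<and> (\<forall>i tr. I i = Some tr \<longrightarrow> disc tr = 0) \<and>
              (\<exists>y. opt_integral m B T I y \<and> SW T I y > 0 \<and>
                   SW (T + \<Gamma> T) I (A T I) / SW T I y \<le> 7/8 + \<epsilon> T))"
proof -
  define \<epsilon> where "\<epsilon> T = (1 + real (\<Gamma> T) + 2 * \<bar>\<Delta> T\<bar>) / real T" for T
  have "\<epsilon> \<longlonglongrightarrow> 0"
    unfolding \<epsilon>_def using smallo_error_tendsto_zero[OF Gamma_o Delta_o] .
  moreover have "\<exists>I. hard_patient_input m B A T (T + \<Gamma> T) (7/8 + \<epsilon> T) I" if "1 \<le> T" for T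
    using exists_hard_patient_input[of m B A T "\<Delta> T" "T + \<Gamma> T"] m2 Bpos onl frac avg that
    by (simp add: \<epsilon>_def)
  ultimately show ?thesis unfolding hard_patient_input_def by blast
qed

end
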